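(* Let $k$ be a field and let $A$ be a $k$-algebra with two graded algebra decompositions $A=\bigoplus_{i=0}^{\infty}A_i=\bigoplus_{i=0}^{\infty}B_i$ such that (1) $A_0=B_0=k$; (2) $A$ is generated as an algebra by $A_1$, and also by $B_1$; (3) either $A_1$ or $B_1$ is finite dimensional over $k$. Suppose that every algebra automorphism of $A$ is graded with respect to the grading $(A_i)_{i\ge0}$, i.e. $\mathrm{Aut}(A)=\mathrm{Aut}_{gr}(A)$. Then $A_i=B_i$ for all $i$.
   Context: $\mathrm{Aut}(A)$ denotes the group of $k$-algebra automorphisms of $A$, and $\mathrm{Aut}_{gr}(A)$ the subgroup of those $\phi$ with $\phi(A_i)=A_i$ for all $i$. *)

theory Defs
  imports Complex_Main
begin

definition k_algebra :: "('k::field \<Rightarrow> 'a::ring_1 \<Rightarrow> 'a) \<Rightarrow> bool" where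
  "k_algebra smult \<longleftrightarrow> vector_space smult \<and>
     (\<forall>c x y. smult c (x * y) = smult c x * y \<and> smult c (x * y) = x * smult c y)"

definition graded_decomp :: "('k::field \<Rightarrow> 'a::ring_1 \<Rightarrow> 'a) \<Rightarrow> (nat \<Rightarrow> 'a set) \<Rightarrow> bool" where
  "graded_decomp smult G \<longleftrightarrow>
     (\<forall>i. module.subspace smult (G i)) \<and>
     (\<forall>x. \<exists>!f :: nat \<Rightarrow> 'a. (\<forall>i. f i \<in> G i) \<and> finite {i. f i \<noteq> 0} \<and>
                             x = (\<Sum>i\<in>{i. f i \<noteq> 0}. f i)) \<and>
     (\<forall>i j. \<forall>x\<in>G i. \<forall>y\<in>G j. x * y \<in> G (i + j)) \<and>
     1 \<in> G 0"

definition alg_gen :: "('k::field \<Rightarrow> 'a::ring_1 \<Rightarrow> 'a) \<Rightarrow> 'a set \<Rightarrow> 'a set" where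
  "alg_gen smult S = \<Inter>{C. S \<subseteq> C \<and> 1 \<in> C \<and> module.subspace smult C \<and>
                           (\<forall>x\<in>C. \<forall>y\<in>C. x * y \<in> C)}"

definition fin_dim :: "('k::field \<Rightarrow> 'a::ring_1 \<Rightarrow> 'a) \<Rightarrow> 'a set \<Rightarrow> bool" where
  "fin_dim smult V \<longleftrightarrow> (\<exists>S. finite S \<and> module.span smult S = V)"

definition alg_aut :: "('k::field \<Rightarrow> 'a::ring_1 \<Rightarrow> 'a) \<Rightarrow> ('a \<Rightarrow> 'a) \<Rightarrow> bool" where
  "alg_aut smult \<phi> \<longleftrightarrow> bij \<phi> \<and> Vector_Spaces.linear smult smult \<phi> \<and>
     (\<forall>x y. \<phi> (x * y) = \<phi> x * \<phi> y) \<and> \<phi> 1 = 1"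

end

theory Submission
  imports Defs
begin

(* Write A<n for the elements of A-degree < n and B>=n for those of B-degree >= n. As A is
   generated by A 1, which lies in B 0 + B>=1 with B 0 = A 0, every element splits as f + g with
   f in A<n and g in B>=n. If A 1 (say) is finite dimensional, so is A<n, and the composite of
   the truncations A<n -> B<n -> A<n is onto, hence injective; thus A = A<n (+) B>=n is a direct
   sum. Sending y in A e to the degree-e B-component of its projection onto B>=e defines an
   algebra automorphism mapping every A e into B e. By hypothesis it also maps A e onto A e, so
   A e is contained in B e for all e, and two gradings one inside the other coincide. *)

lemma (in vector_space) zero_kernel_if_surj_on_finite_span:
  assumes lf: "Vector_Spaces.linear scale scale f" and T: "finite T" "X \<subseteq> span T"
    and onto: "X \<subseteq> f ` X" and x: "x \<in> X" "f x = 0"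
  shows "x = 0"
proof (rule ccontr)
  assume "x \<noteq> 0"
  interpret f: Vector_Spaces.linear scale scale f by (fact lf)
  have "independent {x}" using \<open>x \<noteq> 0\<close> by (simp add: independent_insert)
  then obtain B where B: "{x} \<subseteq> B" "B \<subseteq> X" "independent B" "X \<subseteq> span B"
    using maximal_independent_subset_extend[of "{x}" X] x(1) by blast
  have "B \<subseteq> span T" using B(2) T(2) by blast
  then have fin: "finite B" using independent_span_bound[OF T(1) B(3)] by blast
  have "B = insert x (B - {x})" using B(1) by blast
  then have "f ` B = insert 0 (f ` (B - {x}))" using x(2) by (metis image_insert)
  then have "span (f ` B) = span (f ` (B - {x}))" by simp
  then have "B \<subseteq> span (f ` (B - {x}))" using onto B(2,4) f.span_image by blast
  then have "card B \<le> card (f ` (B - {x}))"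
    using independent_span_bound[of "f ` (B - {x})" B] B(3) fin by auto
  also have "\<dots> < card B"
    using card_image_le[of "B - {x}" f] fin B(1) card_Diff1_less[of B x] by force
  finally show False by simp
qed

locale field_algebra =
  fixes smult :: "'k::field \<Rightarrow> 'a::ring_1 \<Rightarrow> 'a"
  assumes k_algebra: "k_algebra smult"
begin

sublocale vector_space smult
  using k_algebra by (simp add: k_algebra_def)

lemma smult_mult_left: "smult c (x * y) = smult c x * y"
  using k_algebra by (simp add: k_algebra_def)

lemma smult_mult_right: "smult c (x * y) = x * smult c y"
  using k_algebra unfolding k_algebra_def by blast

lemma subspace_left_mult_preimage: "subspace V \<Longrightarrow> subspace {y. x * y \<in> V}"
  by (auto simp: subspace_def distrib_left smult_mult_right[symmetric])

lemma subspace_right_mult_preimage: "subspace V \<Longrightarrow> subspace {x. x * y \<in> V}"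
  by (auto simp: subspace_def distrib_right smult_mult_left[symmetric])

lemma span_mult_closed:
  assumes "\<And>x y. x \<in> X \<Longrightarrow> y \<in> X \<Longrightarrow> x * y \<in> span X"
    and "x \<in> span X" "y \<in> span X"
  shows "x * y \<in> span X"
proof -
  have "x * y \<in> span X" if "x \<in> X" for x
    using span_subspace_induct[OF \<open>y \<in> span X\<close>, of "{y. x * y \<in> span X}"] assms(1) that
    by (auto intro: subspace_left_mult_preimage)
  then show ?thesis
    using span_subspace_induct[OF \<open>x \<in> span X\<close>, of "{x. x * y \<in> span X}"]
    by (auto intro: subspace_right_mult_preimage)
qed

lemma subalgebra_eq_UNIV:
  assumes "alg_gen smult S = UNIV" "subspace C" "1 \<in> C" "S \<subseteq> C"
    "\<And>x y. x \<in> C \<Longrightarrow> y \<in> C \<Longrightarrow> x * y \<in> C"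
  shows "C = UNIV"
  using assms unfolding alg_gen_def by blast

lemma span_prod_lists:
  assumes "alg_gen smult (span S) = UNIV"
  shows "span (prod_list ` lists S) = UNIV"
proof (rule subalgebra_eq_UNIV[OF assms])
  show "1 \<in> span (prod_list ` lists S)" by (rule span_base) (auto intro!: image_eqI[of _ _ "[]"])
  have "S \<subseteq> prod_list ` lists S" by (auto intro!: image_eqI[of _ _ "[_]"])
  then show "span S \<subseteq> span (prod_list ` lists S)" by (rule span_mono)
  have "x * y \<in> span (prod_list ` lists S)"
    if "x \<in> prod_list ` lists S" "y \<in> prod_list ` lists S" for x y
    using that by (auto intro!: span_base image_eqI[of _ _ "_ @ _"])
  then show "x * y \<in> span (prod_list ` lists S)"
    if "x \<in> span (prod_list ` lists S)" "y \<in> span (prod_list ` lists S)" for x y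
    by (rule span_mult_closed[OF _ that])
qed simp

end

locale graded_algebra = field_algebra smult
  for smult :: "'k::field \<Rightarrow> 'a::ring_1 \<Rightarrow> 'a" +
  fixes G :: "nat \<Rightarrow> 'a set"
  assumes graded: "graded_decomp smult G"
begin

lemma subspace_G: "subspace (G i)"
  using graded by (simp add: graded_decomp_def)

lemma mult_G: "x \<in> G i \<Longrightarrow> y \<in> G j \<Longrightarrow> x * y \<in> G (i + j)"
  using graded by (simp add: graded_decomp_def)

lemma one_G0: "1 \<in> G 0"
  using graded by (simp add: graded_decomp_def)

definition homogeneous_decomp :: "'a \<Rightarrow> (nat \<Rightarrow> 'a) \<Rightarrow> bool" where
  "homogeneous_decomp x f \<longleftrightarrow>
     (\<forall>i. f i \<in> G i) \<and> finite {i. f i \<noteq> 0} \<and> x = (\<Sum>i\<in>{i. f i \<noteq> 0}. f i)"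

lemma ex1_homogeneous_decomp: "\<exists>!f. homogeneous_decomp x f"
  using graded unfolding graded_decomp_def homogeneous_decomp_def by blast

definition hcomp :: "nat \<Rightarrow> 'a \<Rightarrow> 'a" where
  "hcomp i x = (THE f. homogeneous_decomp x f) i"

lemma homogeneous_decomp_hcomp: "homogeneous_decomp x (\<lambda>i. hcomp i x)"
  unfolding hcomp_def using theI'[OF ex1_homogeneous_decomp] by simp

lemma hcomp_in: "hcomp i x \<in> G i"
  using homogeneous_decomp_hcomp unfolding homogeneous_decomp_def by blast

lemma finite_hcomp_support: "finite {i. hcomp i x \<noteq> 0}"
  using homogeneous_decomp_hcomp unfolding homogeneous_decomp_def by blast

lemma sum_hcomp:
  assumes "finite S" "{i. hcomp i x \<noteq> 0} \<subseteq> S"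
  shows "(\<Sum>i\<in>S. hcomp i x) = x"
proof -
  have "x = (\<Sum>i\<in>{i. hcomp i x \<noteq> 0}. hcomp i x)"
    using homogeneous_decomp_hcomp unfolding homogeneous_decomp_def by blast
  also have "\<dots> = (\<Sum>i\<in>S. hcomp i x)"
    by (rule sum.mono_neutral_left) (use assms in auto)
  finally show ?thesis by simp
qed

lemma hcomp_unique:
  assumes "finite S" "\<And>i. f i \<in> G i" "\<And>i. i \<notin> S \<Longrightarrow> f i = 0" "x = (\<Sum>i\<in>S. f i)"
  shows "hcomp i x = f i"
proof -
  have supp: "{i. f i \<noteq> 0} \<subseteq> S" using assms(3) by auto
  have "(\<Sum>i\<in>{i. f i \<noteq> 0}. f i) = (\<Sum>i\<in>S. f i)"
    by (rule sum.mono_neutral_left) (use assms supp in auto)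
  then have "homogeneous_decomp x f"
    unfolding homogeneous_decomp_def using assms finite_subset[OF supp] by auto
  then have "(THE f. homogeneous_decomp x f) = f"
    by (rule the1_equality[OF ex1_homogeneous_decomp])
  then show ?thesis unfolding hcomp_def by simp
qed

lemma hcomp_homogeneous: "y \<in> G j \<Longrightarrow> hcomp i y = (if i = j then y else 0)"
  by (rule hcomp_unique[where S="{j}"]) (auto intro: subspace_0[OF subspace_G])

lemma hcomp_add: "hcomp i (x + y) = hcomp i x + hcomp i y"
proof (rule hcomp_unique[where S="{i. hcomp i x \<noteq> 0} \<union> {i. hcomp i y \<noteq> 0}"])
  show "x + y = (\<Sum>i\<in>{i. hcomp i x \<noteq> 0} \<union> {i. hcomp i y \<noteq> 0}. hcomp i x + hcomp i y)"
    using finite_hcomp_support by (simp add: sum.distrib sum_hcomp)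
qed (use finite_hcomp_support hcomp_in subspace_add[OF subspace_G] in auto)

lemma hcomp_scale: "hcomp i (smult c x) = smult c (hcomp i x)"
proof (rule hcomp_unique[where S="{i. hcomp i x \<noteq> 0}"])
  show "smult c x = (\<Sum>i\<in>{i. hcomp i x \<noteq> 0}. smult c (hcomp i x))"
    using finite_hcomp_support by (simp add: scale_sum_right[symmetric] sum_hcomp)
qed (use finite_hcomp_support hcomp_in subspace_scale[OF subspace_G] in auto)

lemma hcomp_zero [simp]: "hcomp i 0 = 0"
  using hcomp_add[of i 0 0] by simp

lemma hcomp_diff: "hcomp i (x - y) = hcomp i x - hcomp i y"
  using hcomp_add[of i "x - y" y] by (simp add: algebra_simps)

lemma hcomp_sum: "hcomp i (sum f S) = (\<Sum>j\<in>S. hcomp i (f j))"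
  by (induct S rule: infinite_finite_induct) (auto simp: hcomp_add)

lemma hcomp_hcomp: "hcomp i (hcomp j x) = (if i = j then hcomp j x else 0)"
  using hcomp_homogeneous[OF hcomp_in] by simp

lemma hcomp_eqI: "(\<And>i. hcomp i x = hcomp i y) \<Longrightarrow> x = y"
  using sum_hcomp[OF finite_hcomp_support order_refl, of "x - y"] by (simp add: hcomp_diff)

lemma mult_in_subspace_if_hcomp_mult:
  assumes "subspace W" "\<And>i j. hcomp i x * hcomp j y \<in> W"
  shows "x * y \<in> W"
proof -
  define S where "S = {i. hcomp i x \<noteq> 0} \<union> {i. hcomp i y \<noteq> 0}"
  have "finite S" using finite_hcomp_support S_def by auto
  then have "x * y = (\<Sum>i\<in>S. hcomp i x) * (\<Sum>j\<in>S. hcomp j y)"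
    using sum_hcomp[of S x] sum_hcomp[of S y] S_def by auto
  also have "\<dots> = (\<Sum>i\<in>S. \<Sum>j\<in>S. hcomp i x * hcomp j y)"
    by (rule sum_product)
  finally show ?thesis using assms by (simp add: subspace_sum)
qed

definition deg_ge :: "nat \<Rightarrow> 'a set" where
  "deg_ge n = {x. \<forall>i<n. hcomp i x = 0}"

definition deg_lt :: "nat \<Rightarrow> 'a set" where
  "deg_lt n = {x. \<forall>i\<ge>n. hcomp i x = 0}"

lemma deg_ge_0 [simp]: "deg_ge 0 = UNIV"
  unfolding deg_ge_def by simp

lemma subspace_deg_ge: "subspace (deg_ge n)"
  unfolding subspace_def deg_ge_def by (auto simp: hcomp_add hcomp_scale)

lemma subspace_deg_lt: "subspace (deg_lt n)"
  unfolding subspace_def deg_lt_def by (auto simp: hcomp_add hcomp_scale)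

lemma homogeneous_in_deg_ge: "z \<in> G m \<Longrightarrow> n \<le> m \<Longrightarrow> z \<in> deg_ge n"
  unfolding deg_ge_def by (auto simp: hcomp_homogeneous)

lemma homogeneous_in_deg_lt: "z \<in> G m \<Longrightarrow> m < n \<Longrightarrow> z \<in> deg_lt n"
  unfolding deg_lt_def by (auto simp: hcomp_homogeneous)

lemma deg_lt_homogeneous_eq_0: "x \<in> deg_lt n \<Longrightarrow> x \<in> G n \<Longrightarrow> x = 0"
  unfolding deg_lt_def using hcomp_homogeneous by fastforce

lemma deg_lt_mono: "x \<in> deg_lt m \<Longrightarrow> m \<le> n \<Longrightarrow> x \<in> deg_lt n"
  unfolding deg_lt_def by auto

lemma deg_ge_antimono: "x \<in> deg_ge n \<Longrightarrow> m \<le> n \<Longrightarrow> x \<in> deg_ge m"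
  unfolding deg_ge_def by auto

lemma diff_hcomp_in_deg_ge: "x \<in> deg_ge i \<Longrightarrow> x - hcomp i x \<in> deg_ge (Suc i)"
  unfolding deg_ge_def by (auto simp: hcomp_diff hcomp_hcomp less_Suc_eq)

lemma mult_in_deg_ge: "x \<in> deg_ge p \<Longrightarrow> y \<in> deg_ge q \<Longrightarrow> x * y \<in> deg_ge (p + q)"
proof (rule mult_in_subspace_if_hcomp_mult[OF subspace_deg_ge])
  fix i j assume "x \<in> deg_ge p" "y \<in> deg_ge q"
  then show "hcomp i x * hcomp j y \<in> deg_ge (p + q)"
  proof (cases "i < p \<or> j < q")
    case False
    then show ?thesis using homogeneous_in_deg_ge[OF mult_G[OF hcomp_in hcomp_in]] by simp
  qed (auto simp: deg_ge_def)
qed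

lemma mult_in_deg_lt: "x \<in> deg_lt p \<Longrightarrow> y \<in> deg_lt q \<Longrightarrow> x * y \<in> deg_lt (p + q - 1)"
proof (rule mult_in_subspace_if_hcomp_mult[OF subspace_deg_lt])
  fix i j assume "x \<in> deg_lt p" "y \<in> deg_lt q"
  then show "hcomp i x * hcomp j y \<in> deg_lt (p + q - 1)"
  proof (cases "p \<le> i \<or> q \<le> j")
    case False
    then have "i + j < p + q - 1" by linarith
    then show ?thesis using homogeneous_in_deg_lt[OF mult_G[OF hcomp_in hcomp_in]] by blast
  qed (auto simp: deg_lt_def)
qed

lemma hcomp_mult_deg_ge:
  assumes x: "x \<in> deg_ge i" and y: "y \<in> deg_ge j"
  shows "hcomp (i + j) (x * y) = hcomp i x * hcomp j y"
proof -
  have "x * y = (x - hcomp i x) * y + hcomp i x * (y - hcomp j y) + hcomp i x * hcomp j y"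
    by (simp add: algebra_simps)
  moreover have "hcomp (i + j) ((x - hcomp i x) * y) = 0"
    using mult_in_deg_ge[OF diff_hcomp_in_deg_ge[OF x] y] unfolding deg_ge_def by auto
  moreover have "hcomp (i + j) (hcomp i x * (y - hcomp j y)) = 0"
    using mult_in_deg_ge[OF homogeneous_in_deg_ge[OF hcomp_in order_refl] diff_hcomp_in_deg_ge[OF y]]
    unfolding deg_ge_def by auto
  ultimately show ?thesis
    by (simp add: hcomp_add hcomp_homogeneous[OF mult_G[OF hcomp_in hcomp_in]])
qed

definition trunc :: "nat \<Rightarrow> 'a \<Rightarrow> 'a" where
  "trunc n x = (\<Sum>i<n. hcomp i x)"

lemma trunc_linear: "Vector_Spaces.linear smult smult (trunc n)"
  by (simp add: Vector_Spaces.linear_iff vector_space_axioms trunc_def hcomp_add hcomp_scale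
      sum.distrib scale_sum_right)

lemma trunc_zero [simp]: "trunc n 0 = 0"
  unfolding trunc_def by simp

lemma hcomp_trunc: "hcomp j (trunc n x) = (if j < n then hcomp j x else 0)"
  unfolding trunc_def by (simp add: hcomp_sum hcomp_hcomp)

lemma trunc_deg_lt: "x \<in> deg_lt n \<Longrightarrow> trunc n x = x"
  by (rule hcomp_eqI) (auto simp: hcomp_trunc deg_lt_def)

lemma trunc_deg_ge: "x \<in> deg_ge n \<Longrightarrow> trunc n x = 0"
  by (rule hcomp_eqI) (auto simp: hcomp_trunc deg_ge_def)

lemma prod_list_in_G: "set w \<subseteq> G 1 \<Longrightarrow> prod_list w \<in> G (length w)"
proof (induct w)
  case (Cons x w)
  then show ?case using mult_G[of x 1 "prod_list w"] by simp
qed (simp add: one_G0)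

lemma deg_lt_finite_span:
  assumes "fin_dim smult (G 1)" "alg_gen smult (G 1) = UNIV"
  shows "\<exists>T. finite T \<and> deg_lt n \<subseteq> span T"
proof -
  obtain S where S: "finite S" "span S = G 1" using assms(1) unfolding fin_dim_def by blast
  have "S \<subseteq> G 1" using S(2) span_base by blast
  then have deg: "prod_list w \<in> G (length w)" if "w \<in> lists S" for w
    using prod_list_in_G that by blast
  define T where "T = insert 0 (prod_list ` {w \<in> lists S. length w \<le> n})"
  have "finite T" unfolding T_def using finite_lists_length_le[OF S(1)] by (auto simp: lists_eq_set)
  interpret trunc: Vector_Spaces.linear smult smult "trunc n" by (rule trunc_linear)
  \<comment> \<open>Truncating a monomial either leaves it unchanged or kills it.\<close>
  have "trunc n (prod_list w) \<in> T" if "w \<in> lists S" for w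
  proof (cases "length w < n")
    case True
    then show ?thesis using that trunc_deg_lt homogeneous_in_deg_lt[OF deg[OF that]]
      unfolding T_def by auto
  next
    case False
    then show ?thesis using trunc_deg_ge homogeneous_in_deg_ge[OF deg[OF that]]
      unfolding T_def by auto
  qed
  then have "trunc n ` prod_list ` lists S \<subseteq> T" by blast
  have "deg_lt n \<subseteq> span T"
  proof
    fix x assume "x \<in> deg_lt n"
    then have "x = trunc n x" by (simp add: trunc_deg_lt)
    also have "\<dots> \<in> trunc n ` span (prod_list ` lists S)"
      using span_prod_lists[of S] assms(2) S(2) by simp
    also have "\<dots> = span (trunc n ` prod_list ` lists S)" by (simp add: trunc.span_image)
    also have "\<dots> \<subseteq> span T" by (rule span_mono) fact
    finally show "x \<in> span T" .
  qed
  then show ?thesis using \<open>finite T\<close> by blast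
qed

definition hextend :: "(nat \<Rightarrow> 'a \<Rightarrow> 'a) \<Rightarrow> 'a \<Rightarrow> 'a" where
  "hextend h x = (\<Sum>i\<in>{i. hcomp i x \<noteq> 0}. h i (hcomp i x))"

context
  fixes h :: "nat \<Rightarrow> 'a \<Rightarrow> 'a"
  assumes h_add: "\<And>i x y. x \<in> G i \<Longrightarrow> y \<in> G i \<Longrightarrow> h i (x + y) = h i x + h i y"
    and h_scale: "\<And>i c x. x \<in> G i \<Longrightarrow> h i (smult c x) = smult c (h i x)"
begin

lemma hextend_eq_sum:
  assumes "finite S" "{i. hcomp i x \<noteq> 0} \<subseteq> S"
  shows "hextend h x = (\<Sum>i\<in>S. h i (hcomp i x))"
proof -
  have "h i 0 = 0" for i
    using h_add[of 0 i 0] subspace_0[OF subspace_G] by simp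
  then show ?thesis
    unfolding hextend_def by (intro sum.mono_neutral_left) (use assms in auto)
qed

lemma hextend_homogeneous:
  assumes "y \<in> G i"
  shows "hextend h y = h i y"
proof -
  have "{j. hcomp j y \<noteq> 0} \<subseteq> {i}" using assms by (auto simp: hcomp_homogeneous)
  then show ?thesis using hextend_eq_sum[of "{i}" y] assms by (simp add: hcomp_homogeneous)
qed

lemma hextend_linear: "Vector_Spaces.linear smult smult (hextend h)"
proof -
  have "hextend h (x + y) = hextend h x + hextend h y" for x y
  proof -
    define S where "S = {i. hcomp i x \<noteq> 0} \<union> {i. hcomp i y \<noteq> 0}"
    have S: "finite S" "{i. hcomp i (x + y) \<noteq> 0} \<subseteq> S"
      using finite_hcomp_support by (auto simp: S_def hcomp_add)
    then show ?thesis
      using hextend_eq_sum[OF S] hextend_eq_sum[OF S(1), of x] hextend_eq_sum[OF S(1), of y]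
      by (simp add: S_def hcomp_add h_add hcomp_in sum.distrib)
  qed
  moreover have "hextend h (smult c x) = smult c (hextend h x)" for c x
  proof -
    have S: "finite {i. hcomp i x \<noteq> 0}" "{i. hcomp i (smult c x) \<noteq> 0} \<subseteq> {i. hcomp i x \<noteq> 0}"
      using finite_hcomp_support by (auto simp: hcomp_scale)
    then show ?thesis
      using hextend_eq_sum[OF S] hextend_eq_sum[OF S(1) order_refl]
      by (simp add: hcomp_scale h_scale hcomp_in scale_sum_right)
  qed
  ultimately show ?thesis
    by (simp add: Vector_Spaces.linear_iff vector_space_axioms)
qed

lemma hextend_mult:
  assumes h_mult: "\<And>i j x y. x \<in> G i \<Longrightarrow> y \<in> G j \<Longrightarrow> h (i + j) (x * y) = h i x * h j y"
  shows "hextend h (x * y) = hextend h x * hextend h y"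
proof -
  interpret hextend: Vector_Spaces.linear smult smult "hextend h" by (rule hextend_linear)
  define S where "S = {i. hcomp i x \<noteq> 0} \<union> {i. hcomp i y \<noteq> 0}"
  have S: "finite S" "{i. hcomp i x \<noteq> 0} \<subseteq> S" "{i. hcomp i y \<noteq> 0} \<subseteq> S"
    using finite_hcomp_support S_def by auto
  have "x * y = (\<Sum>i\<in>S. \<Sum>j\<in>S. hcomp i x * hcomp j y)"
    using sum_hcomp[OF S(1,2)] sum_hcomp[OF S(1,3)] by (simp flip: sum_product)
  then have "hextend h (x * y) = (\<Sum>i\<in>S. \<Sum>j\<in>S. h (i + j) (hcomp i x * hcomp j y))"
    by (simp add: hextend.sum hextend_homogeneous[OF mult_G[OF hcomp_in hcomp_in]])
  also have "\<dots> = (\<Sum>i\<in>S. h i (hcomp i x)) * (\<Sum>j\<in>S. h j (hcomp j y))"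
    by (simp add: h_mult hcomp_in sum_product)
  also have "\<dots> = hextend h x * hextend h y"
    using hextend_eq_sum[OF S(1,2)] hextend_eq_sum[OF S(1,3)] by simp
  finally show ?thesis .
qed

end

end

lemma graded_decomp_eq_if_subset:
  assumes "graded_algebra smult A" "graded_algebra smult B" "\<And>i. A i \<subseteq> B i"
  shows "A i = B i"
proof -
  interpret a: graded_algebra smult A by fact
  interpret b: graded_algebra smult B by fact
  have hB: "a.hcomp j y \<in> B j" for j y using assms(3) a.hcomp_in by blast
  have "y \<in> A i" if y: "y \<in> B i" for y
  proof -
    define S where "S = insert i {j. a.hcomp j y \<noteq> 0}"
    have S: "finite S" "{j. a.hcomp j y \<noteq> 0} \<subseteq> S" "i \<in> S"
      using a.finite_hcomp_support S_def by auto
    have "y = b.hcomp i y" using b.hcomp_homogeneous[OF y] by simp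
    also have "\<dots> = (\<Sum>j\<in>S. b.hcomp i (a.hcomp j y))"
      by (simp add: a.sum_hcomp[OF S(1,2)] flip: b.hcomp_sum)
    also have "\<dots> = (\<Sum>j\<in>S. if j = i then a.hcomp i y else 0)"
      by (intro sum.cong) (auto simp: b.hcomp_homogeneous[OF hB])
    also have "\<dots> = a.hcomp i y" using S by simp
    finally show ?thesis using a.hcomp_in by metis
  qed
  then show ?thesis using assms(3) by blast
qed

locale two_gradings = field_algebra smult + a: graded_algebra smult A + b: graded_algebra smult B
  for smult :: "'k::field \<Rightarrow> 'a::ring_1 \<Rightarrow> 'a" and A B +
  assumes same_degree_0: "A 0 = B 0"
    and generated_A1: "alg_gen smult (A 1) = UNIV"
    and generated_B1: "alg_gen smult (B 1) = UNIV"
begin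

lemma two_gradings_swap: "two_gradings smult B A"
  by unfold_locales (use same_degree_0 generated_A1 generated_B1 in auto)

definition band :: "nat \<Rightarrow> 'a set" where
  "band l = b.deg_ge l \<inter> a.deg_lt (Suc l)"

lemma mult_in_band: "x \<in> band p \<Longrightarrow> y \<in> band q \<Longrightarrow> x * y \<in> band (p + q)"
  unfolding band_def using b.mult_in_deg_ge a.mult_in_deg_lt[of x "Suc p" y "Suc q"] by auto

text \<open>Because \<open>A 0 = B 0\<close>, every element of \<open>A 1\<close> is the sum of an element of \<open>band 0\<close> and
  one of \<open>band 1\<close>; bands multiply like a grading, so they span the algebra.\<close>
lemma span_bands: "span (\<Union>l. band l) = UNIV"
proof (rule subalgebra_eq_UNIV[OF generated_A1])
  show "x * y \<in> span (\<Union>l. band l)" if "x \<in> span (\<Union>l. band l)" "y \<in> span (\<Union>l. band l)" for x y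
    by (rule span_mult_closed[OF _ that]) (auto intro!: span_base dest: mult_in_band)
  have "1 \<in> band 0" unfolding band_def using a.homogeneous_in_deg_lt[OF a.one_G0] by auto
  then show "1 \<in> span (\<Union>l. band l)" by (auto intro: span_base)
  show "A 1 \<subseteq> span (\<Union>l. band l)"
  proof
    fix x assume x: "x \<in> A 1"
    have c: "b.hcomp 0 x \<in> A 0" using b.hcomp_in same_degree_0 by auto
    then have "b.hcomp 0 x \<in> band 0" unfolding band_def using a.homogeneous_in_deg_lt by auto
    moreover have "x - b.hcomp 0 x \<in> band 1"
      unfolding band_def using b.diff_hcomp_in_deg_ge[of x 0]
        a.homogeneous_in_deg_lt[OF x] a.homogeneous_in_deg_lt[OF c] subspace_diff[OF a.subspace_deg_lt]
      by auto
    ultimately have "b.hcomp 0 x + (x - b.hcomp 0 x) \<in> span (\<Union>l. band l)"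
      by (intro span_add) (auto intro: span_base)
    then show "x \<in> span (\<Union>l. band l)" by simp
  qed
qed simp

lemma decompose_low_high: "\<exists>f g. f \<in> a.deg_lt n \<and> g \<in> b.deg_ge n \<and> y = f + g"
proof -
  let ?H = "{f + g |f g. f \<in> a.deg_lt n \<and> g \<in> b.deg_ge n}"
  have "band l \<subseteq> ?H" for l
  proof (cases "l < n")
    case True
    then have "band l \<subseteq> a.deg_lt n" using a.deg_lt_mono unfolding band_def by auto
    then show ?thesis using subspace_0[OF b.subspace_deg_ge] by force
  next
    case False
    then have "band l \<subseteq> b.deg_ge n" using b.deg_ge_antimono unfolding band_def by auto
    then show ?thesis using subspace_0[OF a.subspace_deg_lt] by force
  qed
  then have "span (\<Union>l. band l) \<subseteq> ?H"
    by (intro span_minimal subspace_sums a.subspace_deg_lt b.subspace_deg_ge) auto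
  then show ?thesis using span_bands by blast
qed

lemma deg_lt_subset_trunc_image: "b.deg_lt n \<subseteq> b.trunc n ` a.deg_lt n"
proof
  fix y assume y: "y \<in> b.deg_lt n"
  obtain f g where fg: "f \<in> a.deg_lt n" "g \<in> b.deg_ge n" "y = f + g"
    using decompose_low_high by blast
  interpret trunc: Vector_Spaces.linear smult smult "b.trunc n" by (rule b.trunc_linear)
  have "b.trunc n f = y"
    using fg(3) b.trunc_deg_lt[OF y] b.trunc_deg_ge[OF fg(2)] by (simp add: trunc.add)
  then show "y \<in> b.trunc n ` a.deg_lt n" using fg(1) by blast
qed

text \<open>If \<open>a.deg_lt n\<close> is finite dimensional, the composite of the two truncations maps it onto
  itself, hence injectively.\<close>
lemma trunc_trunc_eq_0_imp_eq_0:
  assumes T: "finite T" "a.deg_lt n \<subseteq> span T"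
    and x: "x \<in> a.deg_lt n" "a.trunc n (b.trunc n x) = 0"
  shows "x = 0"
proof (rule zero_kernel_if_surj_on_finite_span[OF _ T])
  interpret swap: two_gradings smult B A by (rule two_gradings_swap)
  show "Vector_Spaces.linear smult smult (a.trunc n \<circ> b.trunc n)"
    using Vector_Spaces.linear_compose[OF b.trunc_linear a.trunc_linear] .
  show "a.deg_lt n \<subseteq> (a.trunc n \<circ> b.trunc n) ` a.deg_lt n"
    using deg_lt_subset_trunc_image swap.deg_lt_subset_trunc_image by (fastforce simp: image_comp)
qed (use x in auto)

end

locale two_gradings_finite = two_gradings +
  assumes finite_degree_1: "fin_dim smult (A 1) \<or> fin_dim smult (B 1)"
begin

lemma low_inter_high_eq_0:
  assumes x: "x \<in> a.deg_lt n" "x \<in> b.deg_ge n"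
  shows "x = 0"
  using finite_degree_1
proof
  assume "fin_dim smult (A 1)"
  then obtain T where "finite T" "a.deg_lt n \<subseteq> span T"
    using a.deg_lt_finite_span generated_A1 by blast
  moreover have "a.trunc n (b.trunc n x) = 0"
    using b.trunc_deg_ge[OF x(2)] by simp
  ultimately show "x = 0" using trunc_trunc_eq_0_imp_eq_0 x(1) by blast
next
  assume "fin_dim smult (B 1)"
  then obtain T where T: "finite T" "b.deg_lt n \<subseteq> span T"
    using b.deg_lt_finite_span generated_B1 by blast
  interpret swap: two_gradings smult B A by (rule two_gradings_swap)
  obtain g where g: "g \<in> b.deg_lt n" "a.trunc n g = x"
    using swap.deg_lt_subset_trunc_image x(1) by blast
  then have "g = 0"
    using swap.trunc_trunc_eq_0_imp_eq_0[OF T g(1)] b.trunc_deg_ge[OF x(2)] by simp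
  then show "x = 0"
    using g(2) by simp
qed

text \<open>The projection onto \<open>b.deg_ge e\<close> along \<open>a.deg_lt e\<close>: the two subspaces are complementary by
  \<open>decompose_low_high\<close> and \<open>low_inter_high_eq_0\<close>.\<close>
definition proj_high where
  "proj_high e y = (THE g. g \<in> b.deg_ge e \<and> y - g \<in> a.deg_lt e)"

lemma ex1_proj_high: "\<exists>!g. g \<in> b.deg_ge e \<and> y - g \<in> a.deg_lt e"
proof -
  obtain f g where fg: "f \<in> a.deg_lt e" "g \<in> b.deg_ge e" "y = f + g"
    using decompose_low_high by blast
  show ?thesis
  proof (rule ex1I[of _ g])
    show "g \<in> b.deg_ge e \<and> y - g \<in> a.deg_lt e" using fg by simp
    fix g' assume g': "g' \<in> b.deg_ge e \<and> y - g' \<in> a.deg_lt e"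
    have "g' - g \<in> b.deg_ge e" using g' fg subspace_diff[OF b.subspace_deg_ge] by blast
    moreover have "f - (y - g') \<in> a.deg_lt e"
      using subspace_diff[OF a.subspace_deg_lt fg(1) conjunct2[OF g']] .
    moreover have "f - (y - g') = g' - g" using fg(3) by simp
    ultimately show "g' = g" using low_inter_high_eq_0 by fastforce
  qed
qed

lemma proj_high_in: "proj_high e y \<in> b.deg_ge e"
  and diff_proj_high_in: "y - proj_high e y \<in> a.deg_lt e"
  using theI'[OF ex1_proj_high[of e y]] unfolding proj_high_def by auto

lemma proj_high_unique: "g \<in> b.deg_ge e \<Longrightarrow> y - g \<in> a.deg_lt e \<Longrightarrow> proj_high e y = g"
  unfolding proj_high_def by (rule the1_equality[OF ex1_proj_high]) simp

lemma proj_high_add: "proj_high e (x + y) = proj_high e x + proj_high e y"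
proof (rule proj_high_unique)
  show "proj_high e x + proj_high e y \<in> b.deg_ge e"
    using proj_high_in subspace_add[OF b.subspace_deg_ge] by blast
  have "x + y - (proj_high e x + proj_high e y) = (x - proj_high e x) + (y - proj_high e y)"
    by simp
  then show "x + y - (proj_high e x + proj_high e y) \<in> a.deg_lt e"
    using subspace_add[OF a.subspace_deg_lt diff_proj_high_in diff_proj_high_in] by metis
qed

lemma proj_high_scale: "proj_high e (smult c x) = smult c (proj_high e x)"
proof (rule proj_high_unique)
  show "smult c (proj_high e x) \<in> b.deg_ge e"
    using proj_high_in subspace_scale[OF b.subspace_deg_ge] by blast
  show "smult c x - smult c (proj_high e x) \<in> a.deg_lt e"
    using subspace_scale[OF a.subspace_deg_lt diff_proj_high_in]
    by (simp add: scale_right_diff_distrib)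
qed

lemma proj_high_homogeneous_in:
  assumes "y \<in> A e"
  shows "proj_high e y \<in> a.deg_lt (Suc e)"
proof -
  have "y - (y - proj_high e y) \<in> a.deg_lt (Suc e)"
    using subspace_diff[OF a.subspace_deg_lt a.homogeneous_in_deg_lt[OF assms lessI]
        a.deg_lt_mono[OF diff_proj_high_in[of y e], where n="Suc e"]] by simp
  then show ?thesis by simp
qed

lemma proj_high_mult:
  assumes x: "x \<in> A i" and y: "y \<in> A j"
  shows "proj_high (i + j) (x * y) = proj_high i x * proj_high j y"
proof (rule proj_high_unique)
  show "proj_high i x * proj_high j y \<in> b.deg_ge (i + j)"
    using b.mult_in_deg_ge proj_high_in by blast
  have "(x - proj_high i x) * proj_high j y \<in> a.deg_lt (i + j)"
    using a.mult_in_deg_lt[OF diff_proj_high_in proj_high_homogeneous_in[OF y]] by simp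
  moreover have "x * (y - proj_high j y) \<in> a.deg_lt (i + j)"
    using a.mult_in_deg_lt[OF a.homogeneous_in_deg_lt[OF x, of "Suc i"] diff_proj_high_in] by simp
  moreover have "x * y - proj_high i x * proj_high j y
      = (x - proj_high i x) * proj_high j y + x * (y - proj_high j y)"
    by (simp add: algebra_simps)
  ultimately show "x * y - proj_high i x * proj_high j y \<in> a.deg_lt (i + j)"
    using subspace_add[OF a.subspace_deg_lt] by metis
qed

lemma proj_high_one: "proj_high 0 1 = 1"
  by (rule proj_high_unique) (auto simp: a.deg_lt_def)

text \<open>For \<open>y \<in> A e\<close>, \<open>regrade_comp e y\<close> is the leading \<open>B\<close>-component of \<open>y\<close> modulo
  \<open>a.deg_lt e\<close>; these maps assemble into an automorphism carrying each \<open>A e\<close> into \<open>B e\<close>.\<close>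
definition regrade_comp where
  "regrade_comp e y = b.hcomp e (proj_high e y)"

definition regrade where
  "regrade = a.hextend regrade_comp"

lemma regrade_comp_in: "regrade_comp e y \<in> B e"
  unfolding regrade_comp_def by (rule b.hcomp_in)

lemma regrade_comp_add: "regrade_comp e (x + y) = regrade_comp e x + regrade_comp e y"
  unfolding regrade_comp_def by (simp add: proj_high_add b.hcomp_add)

lemma regrade_comp_zero [simp]: "regrade_comp e 0 = 0"
  using regrade_comp_add[of e 0 0] by simp

lemma regrade_comp_scale: "regrade_comp e (smult c x) = smult c (regrade_comp e x)"
  unfolding regrade_comp_def by (simp add: proj_high_scale b.hcomp_scale)

lemma regrade_comp_mult:
  "x \<in> A i \<Longrightarrow> y \<in> A j \<Longrightarrow> regrade_comp (i + j) (x * y) = regrade_comp i x * regrade_comp j y"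
  unfolding regrade_comp_def by (simp add: proj_high_mult b.hcomp_mult_deg_ge proj_high_in)

lemma regrade_comp_eq_0_imp:
  assumes y: "y \<in> A e" and "regrade_comp e y = 0"
  shows "y = 0"
proof -
  have "proj_high e y \<in> b.deg_ge (Suc e)"
    using proj_high_in[of e y] assms(2) unfolding regrade_comp_def b.deg_ge_def
    by (auto simp: less_Suc_eq)
  then have "proj_high e y = 0"
    using low_inter_high_eq_0 proj_high_homogeneous_in[OF y] by blast
  then show "y = 0"
    using diff_proj_high_in[of y e] a.deg_lt_homogeneous_eq_0 y by simp
qed

lemma regrade_comp_degree_1: "x \<in> A 1 \<Longrightarrow> regrade_comp 1 x = b.hcomp 1 x"
proof -
  assume x: "x \<in> A 1"
  have "b.hcomp 0 x \<in> A 0" using b.hcomp_in same_degree_0 by simp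
  then have "proj_high 1 x = x - b.hcomp 0 x"
    using b.diff_hcomp_in_deg_ge[of x 0] a.homogeneous_in_deg_lt
    by (intro proj_high_unique) auto
  then show ?thesis unfolding regrade_comp_def by (simp add: b.hcomp_diff b.hcomp_hcomp)
qed

lemma regrade_linear: "Vector_Spaces.linear smult smult regrade"
  unfolding regrade_def by (rule a.hextend_linear) (simp_all add: regrade_comp_add regrade_comp_scale)

lemma regrade_homogeneous: "y \<in> A e \<Longrightarrow> regrade y = regrade_comp e y"
  unfolding regrade_def using a.hextend_homogeneous[of regrade_comp, OF regrade_comp_add regrade_comp_scale] .

lemma regrade_mult: "regrade (x * y) = regrade x * regrade y"
  unfolding regrade_def
  using a.hextend_mult[of regrade_comp, OF regrade_comp_add regrade_comp_scale regrade_comp_mult] .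

lemma regrade_one: "regrade 1 = 1"
  using regrade_homogeneous[OF a.one_G0] b.hcomp_homogeneous[OF b.one_G0]
  unfolding regrade_comp_def by (simp add: proj_high_one)

lemma hcomp_regrade: "b.hcomp j (regrade y) = regrade_comp j (a.hcomp j y)"
proof -
  have "b.hcomp j (regrade y) = (\<Sum>i\<in>{i. a.hcomp i y \<noteq> 0}. b.hcomp j (regrade_comp i (a.hcomp i y)))"
    unfolding regrade_def a.hextend_def by (rule b.hcomp_sum)
  also have "\<dots> = (\<Sum>i\<in>{i. a.hcomp i y \<noteq> 0}. if i = j then regrade_comp j (a.hcomp j y) else 0)"
    by (intro sum.cong) (auto simp: b.hcomp_homogeneous[OF regrade_comp_in])
  also have "\<dots> = regrade_comp j (a.hcomp j y)"
    using a.finite_hcomp_support by (auto simp: sum.delta)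
  finally show ?thesis .
qed

lemma inj_regrade: "inj regrade"
proof -
  interpret regrade: Vector_Spaces.linear smult smult regrade by (rule regrade_linear)
  have "y = 0" if "regrade y = 0" for y
  proof (rule a.hcomp_eqI)
    fix j
    have "regrade_comp j (a.hcomp j y) = 0" using hcomp_regrade[of j y] that by simp
    then show "a.hcomp j y = a.hcomp j 0" using regrade_comp_eq_0_imp[OF a.hcomp_in] by simp
  qed
  then show ?thesis using regrade.inj_iff_eq_0 by blast
qed

text \<open>The image of \<open>regrade\<close> is a subalgebra containing \<open>B 1\<close>: an element of \<open>B 1\<close> is the
  \<open>B 1\<close>-component of its \<open>A 1\<close>-component.\<close>
lemma surj_regrade: "surj regrade"
proof (rule subalgebra_eq_UNIV[OF generated_B1])
  interpret regrade: Vector_Spaces.linear smult smult regrade by (rule regrade_linear)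
  show "subspace (range regrade)" using regrade.subspace_image[OF subspace_UNIV] .
  show "1 \<in> range regrade" using regrade_one by (metis rangeI)
  show "x * y \<in> range regrade" if xy: "x \<in> range regrade" "y \<in> range regrade" for x y
  proof -
    obtain u v where "x = regrade u" "y = regrade v" using xy by blast
    then show ?thesis by (simp flip: regrade_mult)
  qed
  show "B 1 \<subseteq> range regrade"
  proof
    fix b assume b: "b \<in> B 1"
    obtain f g where fg: "f \<in> a.deg_lt 2" "g \<in> b.deg_ge 2" "b = f + g"
      using decompose_low_high by blast
    have "b.hcomp 1 g = 0" using fg(2) by (simp add: b.deg_ge_def)
    then have "b = b.hcomp 1 f"
      using b.hcomp_homogeneous[OF b, of 1] fg(3) by (simp add: b.hcomp_add)
    also have "f = a.hcomp 0 f + a.hcomp 1 f"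
      using a.trunc_deg_lt[OF fg(1)] by (simp add: a.trunc_def numeral_2_eq_2)
    also have "b.hcomp 1 (a.hcomp 0 f + a.hcomp 1 f) = b.hcomp 1 (a.hcomp 1 f)"
      using b.hcomp_homogeneous[of "a.hcomp 0 f" 0 1] a.hcomp_in[of 0 f] same_degree_0
      by (simp add: b.hcomp_add)
    also have "\<dots> = regrade (a.hcomp 1 f)"
      using regrade_homogeneous[OF a.hcomp_in] regrade_comp_degree_1[OF a.hcomp_in] by simp
    finally show "b \<in> range regrade" by blast
  qed
qed

lemma alg_aut_regrade: "alg_aut smult regrade"
  unfolding alg_aut_def
  using inj_regrade surj_regrade regrade_linear regrade_mult regrade_one by (simp add: bij_def)

lemma regrade_image_homogeneous: "regrade ` A e \<subseteq> B e"
  using regrade_homogeneous regrade_comp_in by auto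

end

theorem corollary3:
  fixes smult :: "'k::field \<Rightarrow> 'a::ring_1 \<Rightarrow> 'a"
    and A B :: "nat \<Rightarrow> 'a set"
  assumes "k_algebra smult"
    and "graded_decomp smult A"
    and "graded_decomp smult B"
    and "A 0 = range (\<lambda>c. smult c 1)"
    and "B 0 = range (\<lambda>c. smult c 1)"
    and "alg_gen smult (A 1) = UNIV"
    and "alg_gen smult (B 1) = UNIV"
    and "fin_dim smult (A 1) \<or> fin_dim smult (B 1)"
    and "\<forall>\<phi>. alg_aut smult \<phi> \<longrightarrow> (\<forall>i. \<phi> ` A i = A i)"
  shows "\<forall>i. A i = B i"
proof -
  interpret two_gradings_finite smult A B
    by unfold_locales (use assms in \<open>auto simp: graded_algebra_def field_algebra_def\<close>)
  have "A i = regrade ` A i" for i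
    using assms(9) alg_aut_regrade by blast
  then have "A i \<subseteq> B i" for i
    using regrade_image_homogeneous by blast
  then show ?thesis
    using graded_decomp_eq_if_subset a.graded_algebra_axioms b.graded_algebra_axioms by blast
qed

end
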